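(* Let $h:(\mathbb R^2,0)\to(\mathbb R,0)$ be a $C^\infty$ function germ with $h=0$ on $\{(x,y):x\ge0\text{ and }y\le0\}$. Then there exists a $C^\infty$ function germ $\tilde h:(\mathbb R^2,0)\to(\mathbb R,0)$ such that $\tilde h=h$ on $\{x\ge0\}$ and $\tilde h=0$ on $\{y\le0\}$.
   Context: Equalities of germs on subsets are meant on the intersection of the subset with some neighbourhood of $0$. *)

theory Defs
  imports "HOL-Analysis.Analysis"
begin

text \<open>C-infinity functions on an (open) subset of the plane, via the standard
coordinate characterisation: all iterated partial derivatives exist and are
continuous.\<close>

definition smooth_on :: "(real \<times> real) set \<Rightarrow> (real \<times> real \<Rightarrow> real) \<Rightarrow> bool" where
  "smooth_on U f \<longleftrightarrow>
     (\<exists>D :: nat \<Rightarrow> nat \<Rightarrow> (real \<times> real \<Rightarrow> real).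
        (\<forall>p\<in>U. D 0 0 p = f p) \<and>
        (\<forall>i j. continuous_on U (D i j)) \<and>
        (\<forall>i j x y. (x, y) \<in> U \<longrightarrow>
            ((\<lambda>t. D i j (t, y)) has_real_derivative D (Suc i) j (x, y)) (at x) \<and>
            ((\<lambda>t. D i j (x, t)) has_real_derivative D i (Suc j) (x, y)) (at y)))"

end

theory Submission
  imports Defs "HOL-Computational_Algebra.Polynomial"
begin

text \<open>
  Let \<open>B\<close> be a smooth step, 0 below 1/2 and 1 above 2, and put \<open>G (x, y) = B (y / -x)\<close> for
  \<open>x < 0\<close> and \<open>G = 1\<close> for \<open>x \<ge> 0\<close>. Then \<open>h * G\<close> agrees with \<open>h\<close> on \<open>x \<ge> 0\<close>, and it vanishes on
  \<open>y \<le> 0\<close> because there either \<open>x \<ge> 0\<close> and \<open>h = 0\<close>, or \<open>x < 0\<close> and \<open>G = 0\<close>.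
  \<open>G\<close> is smooth away from the ray \<open>{x = 0, y \<le> 0}\<close> (near the positive y-axis it is 1), and its
  partial derivatives grow at most like a power of \<open>1/d\<close>, where \<open>d\<close> is the distance to the
  quadrant \<open>{x \<ge> 0, y \<le> 0}\<close>. Since \<open>h\<close> vanishes on that quadrant, each of its partial
  derivatives is \<open>O(d^N)\<close> for every \<open>N\<close>. By the Leibniz rule the same holds for the partial
  derivatives of \<open>h * G\<close> off the ray, so extending them by 0 across the ray gives a smooth
  function on a neighbourhood of the origin.
\<close>

section \<open>Smooth functions of one variable\<close>

coinductive smooth_fun :: "(real \<Rightarrow> real) \<Rightarrow> bool" where
  "(\<And>t. (f has_real_derivative f' t) (at t)) \<Longrightarrow> smooth_fun f' \<Longrightarrow> smooth_fun f"

inductive_set fun_algebra :: "(real \<Rightarrow> real) set \<Rightarrow> (real \<Rightarrow> real) set" for S where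
  fun_algebra_base: "f \<in> S \<Longrightarrow> f \<in> fun_algebra S"
| fun_algebra_const: "(\<lambda>t. c) \<in> fun_algebra S"
| fun_algebra_add: "f \<in> fun_algebra S \<Longrightarrow> g \<in> fun_algebra S \<Longrightarrow> (\<lambda>t. f t + g t) \<in> fun_algebra S"
| fun_algebra_mult: "f \<in> fun_algebra S \<Longrightarrow> g \<in> fun_algebra S \<Longrightarrow> (\<lambda>t. f t * g t) \<in> fun_algebra S"

lemma fun_algebra_has_derivative:
  assumes S: "\<And>f. f \<in> S \<Longrightarrow> \<exists>f'\<in>fun_algebra S. \<forall>t. (f has_real_derivative f' t) (at t)"
    and "f \<in> fun_algebra S"
  shows "\<exists>f'\<in>fun_algebra S. \<forall>t. (f has_real_derivative f' t) (at t)"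
  using assms(2)
proof induction
  case (fun_algebra_base f)
  then show ?case using S by blast
next
  case (fun_algebra_const c)
  show ?case by (intro bexI[of _ "\<lambda>t. 0"] fun_algebra.fun_algebra_const) auto
next
  case (fun_algebra_add f g)
  then obtain f' g' where "f' \<in> fun_algebra S" "g' \<in> fun_algebra S"
    "\<forall>t. (f has_real_derivative f' t) (at t)" "\<forall>t. (g has_real_derivative g' t) (at t)"
    by blast
  then show ?case
    by (intro bexI[of _ "\<lambda>t. f' t + g' t"] fun_algebra.fun_algebra_add allI)
      (auto intro!: derivative_eq_intros)
next
  case (fun_algebra_mult f g)
  then obtain f' g' where "f' \<in> fun_algebra S" "g' \<in> fun_algebra S"
    "\<forall>t. (f has_real_derivative f' t) (at t)" "\<forall>t. (g has_real_derivative g' t) (at t)"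
    by blast
  then show ?case using fun_algebra_mult
    by (intro bexI[of _ "\<lambda>t. f' t * g t + f t * g' t"] fun_algebra.fun_algebra_add fun_algebra.fun_algebra_mult allI)
      (auto intro!: derivative_eq_intros)
qed

lemma smooth_fun_algebra:
  assumes "\<And>f. f \<in> S \<Longrightarrow> \<exists>f'\<in>fun_algebra S. \<forall>t. (f has_real_derivative f' t) (at t)"
    and "f \<in> fun_algebra S"
  shows "smooth_fun f"
  using assms(2)
proof (coinduction arbitrary: f)
  case (smooth_fun f)
  then show ?case using fun_algebra_has_derivative[OF assms(1) smooth_fun] by blast
qed

lemma smooth_fun_deriv:
  assumes "smooth_fun f"
  shows "(f has_real_derivative deriv f t) (at t)" and "smooth_fun (deriv f)"
proof -
  obtain f' where f': "\<And>t. (f has_real_derivative f' t) (at t)" "smooth_fun f'"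
    using assms by (cases rule: smooth_fun.cases) auto
  have "deriv f = f'" using f'(1) by (auto intro: DERIV_imp_deriv)
  then show "(f has_real_derivative deriv f t) (at t)" "smooth_fun (deriv f)" using f' by auto
qed

lemma smooth_fun_algebra_over_smooth:
  assumes "\<And>f. f \<in> S \<Longrightarrow>
      \<exists>f'\<in>fun_algebra (Collect smooth_fun \<union> S). \<forall>t. (f has_real_derivative f' t) (at t)"
    and "f \<in> fun_algebra (Collect smooth_fun \<union> S)"
  shows "smooth_fun f"
proof (rule smooth_fun_algebra[OF _ assms(2)])
  fix g assume g: "g \<in> Collect smooth_fun \<union> S"
  show "\<exists>g'\<in>fun_algebra (Collect smooth_fun \<union> S). \<forall>t. (g has_real_derivative g' t) (at t)"
  proof (cases "smooth_fun g")
    case True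
    then show ?thesis
      by (intro bexI[of _ "deriv g"] fun_algebra_base) (auto intro: smooth_fun_deriv)
  next
    case False
    then show ?thesis using g assms(1) by blast
  qed
qed

lemma smooth_fun_const: "smooth_fun (\<lambda>t. c)"
  by (rule smooth_fun_algebra[where S="{}"]) (auto intro: fun_algebra_const)

lemma smooth_fun_ident: "smooth_fun (\<lambda>t. t)"
  by (rule smooth_fun.intros[of _ "\<lambda>t. 1"]) (auto intro: smooth_fun_const)

lemma smooth_fun_add:
  assumes "smooth_fun f" and "smooth_fun g"
  shows "smooth_fun (\<lambda>t. f t + g t)"
  using assms by (intro smooth_fun_algebra_over_smooth[where S="{}"]
      fun_algebra.fun_algebra_add fun_algebra.fun_algebra_base) auto

lemma smooth_fun_mult:
  assumes "smooth_fun f" and "smooth_fun g"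
  shows "smooth_fun (\<lambda>t. f t * g t)"
  using assms by (intro smooth_fun_algebra_over_smooth[where S="{}"]
      fun_algebra.fun_algebra_mult fun_algebra.fun_algebra_base) auto

lemma smooth_fun_compose:
  assumes f: "smooth_fun f" and g: "smooth_fun g"
  shows "smooth_fun (\<lambda>t. f (g t))"
proof (rule smooth_fun_algebra_over_smooth[where S="{\<lambda>t. f0 (g t) | f0. smooth_fun f0}"])
  fix h assume "h \<in> {\<lambda>t. f0 (g t) | f0. smooth_fun f0}"
  then obtain f0 where f0: "smooth_fun f0" "h = (\<lambda>t. f0 (g t))" by blast
  have "(h has_real_derivative deriv f0 (g t) * deriv g t) (at t)" for t
    unfolding f0(2) by (rule DERIV_chain2[OF smooth_fun_deriv(1) smooth_fun_deriv(1)]) fact+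
  moreover have "(\<lambda>t. deriv f0 (g t)) \<in> {\<lambda>t. f0 (g t) | f0. smooth_fun f0}"
    using smooth_fun_deriv(2)[OF f0(1)] by blast
  then have "(\<lambda>t. deriv f0 (g t) * deriv g t)
      \<in> fun_algebra (Collect smooth_fun \<union> {\<lambda>t. f0 (g t) | f0. smooth_fun f0})"
    using smooth_fun_deriv(2)[OF g]
    by (intro fun_algebra.fun_algebra_mult fun_algebra.fun_algebra_base) auto
  ultimately show "\<exists>h'\<in>fun_algebra (Collect smooth_fun \<union> {\<lambda>t. f0 (g t) | f0. smooth_fun f0}).
      \<forall>t. (h has_real_derivative h' t) (at t)"
    by (intro bexI) auto
qed (use f in \<open>blast intro: fun_algebra_base\<close>)

lemma smooth_fun_inverse:
  assumes g: "smooth_fun g" and nz: "\<And>t. g t \<noteq> 0"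
  shows "smooth_fun (\<lambda>t. 1 / g t)"
proof (rule smooth_fun_algebra_over_smooth[where S="{\<lambda>t. 1 / g t}"])
  let ?A = "fun_algebra (Collect smooth_fun \<union> {\<lambda>t. 1 / g t})"
  fix f assume "f \<in> {\<lambda>t. 1 / g t}"
  then have f: "f = (\<lambda>t. 1 / g t)" by simp
  have "\<forall>t. (f has_real_derivative (-1) * deriv g t * (1 / g t) * (1 / g t)) (at t)"
    unfolding f using smooth_fun_deriv(1)[OF g] nz
    by (auto intro!: derivative_eq_intros simp: power2_eq_square field_simps)
  moreover have "(\<lambda>t. (-1) * deriv g t * (1 / g t) * (1 / g t)) \<in> ?A"
    using smooth_fun_deriv(2)[OF g]
    by (intro fun_algebra.fun_algebra_mult fun_algebra.fun_algebra_const fun_algebra.fun_algebra_base) auto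
  ultimately show "\<exists>f'\<in>?A. \<forall>t. (f has_real_derivative f' t) (at t)"
    by (intro bexI) auto
qed (auto intro: fun_algebra_base)

lemma smooth_fun_higher_deriv:
  assumes "smooth_fun f"
  shows "smooth_fun ((deriv ^^ k) f)"
    and "((deriv ^^ k) f has_real_derivative (deriv ^^ Suc k) f t) (at t)"
proof -
  show *: "smooth_fun ((deriv ^^ k) f)"
    using assms by (induction k) (auto intro: smooth_fun_deriv(2))
  show "((deriv ^^ k) f has_real_derivative (deriv ^^ Suc k) f t) (at t)"
    using smooth_fun_deriv(1)[OF *] by simp
qed

lemma higher_deriv_locally_const:
  assumes "smooth_fun f" "open S" "\<And>s. s \<in> S \<Longrightarrow> f s = c" "t \<in> S"
  shows "(deriv ^^ k) f t = (if k = 0 then c else 0)"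
  using assms(4)
proof (induction k arbitrary: t)
  case 0
  then show ?case using assms(3) by simp
next
  case (Suc k)
  have "((deriv ^^ k) f has_real_derivative 0) (at t)"
    by (rule has_field_derivative_transform_within_open[OF DERIV_const assms(2) Suc.prems])
      (use Suc.IH in auto)
  then show ?case
    using smooth_fun_higher_deriv(2)[OF assms(1)] DERIV_unique by fastforce
qed

section \<open>A smooth step function\<close>

definition expinv_poly :: "real poly \<Rightarrow> real \<Rightarrow> real" where
  "expinv_poly p t = (if t > 0 then poly p (1 / t) * exp (- (1 / t)) else 0)"

lemma tendsto_poly_times_exp_at_top: "((\<lambda>u. poly p u * exp (- u)) \<longlongrightarrow> (0::real)) at_top"
proof -
  have eq: "poly p u * exp (- u) = (\<Sum>i\<le>degree p. coeff p i * (u ^ i / exp u))" for u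
    by (simp add: poly_altdef exp_minus divide_inverse sum_distrib_right mult.assoc)
  have "((\<lambda>u. \<Sum>i\<le>degree p. coeff p i * (u ^ i / exp u)) \<longlongrightarrow> (0::real)) at_top"
    by (intro tendsto_null_sum tendsto_mult_right_zero tendsto_power_div_exp_0)
  then show ?thesis unfolding eq .
qed

lemma expinv_poly_has_derivative:
  "(expinv_poly p has_real_derivative expinv_poly ([:0, 0, 1:] * (p - pderiv p)) t) (at t)"
proof -
  consider "t > 0" | "t < 0" | "t = 0" by linarith
  then show ?thesis
  proof cases
    case 1
    have "((\<lambda>t. poly p (1 / t) * exp (- (1 / t))) has_real_derivative
        expinv_poly ([:0, 0, 1:] * (p - pderiv p)) t) (at t)"
      using 1 by (auto intro!: derivative_eq_intros DERIV_chain2[OF poly_DERIV]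
          simp: expinv_poly_def power2_eq_square field_simps)
    then show ?thesis
      by (rule has_field_derivative_transform_within_open[of _ _ _ "{0<..}"])
        (use 1 in \<open>auto simp: expinv_poly_def\<close>)
  next
    case 2
    then have "expinv_poly ([:0, 0, 1:] * (p - pderiv p)) t = 0"
      by (simp add: expinv_poly_def)
    moreover have "(expinv_poly p has_real_derivative 0) (at t)"
      using 2 by (intro has_field_derivative_transform_within_open[OF DERIV_const[of 0], where S="{..<0}"])
        (auto simp: expinv_poly_def)
    ultimately show ?thesis by simp
  next
    case 3
    have "((\<lambda>h. expinv_poly p h / h) \<longlongrightarrow> 0) (at_left 0)"
      by (rule Lim_transform_eventually[OF tendsto_const])
        (auto simp: eventually_at_left_field expinv_poly_def intro!: exI[of _ "-1"])
    moreover have "((\<lambda>h. expinv_poly p h / h) \<longlongrightarrow> 0) (at_right 0)"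
    proof (rule Lim_transform_eventually)
      show "((\<lambda>h. poly (pCons 0 p) (inverse h) * exp (- inverse h)) \<longlongrightarrow> 0) (at_right 0)"
        by (rule filterlim_compose[OF tendsto_poly_times_exp_at_top filterlim_inverse_at_top_right])
      show "\<forall>\<^sub>F h in at_right 0. poly (pCons 0 p) (inverse h) * exp (- inverse h) = expinv_poly p h / h"
        by (auto simp: eventually_at_right_field expinv_poly_def inverse_eq_divide intro!: exI[of _ 1])
    qed
    ultimately have "((\<lambda>h. expinv_poly p h / h) \<longlongrightarrow> 0) (at 0)"
      by (rule filterlim_split_at)
    then show ?thesis
      unfolding 3 DERIV_def by (simp add: expinv_poly_def)
  qed
qed

lemma smooth_fun_expinv_poly: "smooth_fun (expinv_poly p)"
proof (rule smooth_fun_algebra[where S="range expinv_poly"])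
  fix f assume "f \<in> range expinv_poly"
  then obtain p where "f = expinv_poly p" by blast
  then show "\<exists>f'\<in>fun_algebra (range expinv_poly). \<forall>t. (f has_real_derivative f' t) (at t)"
    using expinv_poly_has_derivative
    by (intro bexI[of _ "expinv_poly ([:0, 0, 1:] * (p - pderiv p))"] fun_algebra_base) auto
qed (auto intro: fun_algebra_base)

definition smooth_step :: "real \<Rightarrow> real" where
  "smooth_step t = expinv_poly 1 (t - 1/2) / (expinv_poly 1 (t - 1/2) + expinv_poly 1 (2 - t))"

lemma smooth_fun_smooth_step: "smooth_fun smooth_step"
proof -
  let ?a = "\<lambda>t. expinv_poly 1 (t - 1/2)" and ?b = "\<lambda>t. expinv_poly 1 (2 - t)"
  have "smooth_fun (\<lambda>t. t + (- 1/2))" "smooth_fun (\<lambda>t. (-1) * t + 2)"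
    by (intro smooth_fun_add smooth_fun_mult smooth_fun_ident smooth_fun_const)+
  then have a: "smooth_fun ?a" and b: "smooth_fun ?b"
    using smooth_fun_compose[OF smooth_fun_expinv_poly] by simp_all
  have "?a t + ?b t \<noteq> 0" for t
  proof -
    have "?a t \<ge> 0" "?b t \<ge> 0" "?a t > 0 \<or> ?b t > 0"
      by (auto simp: expinv_poly_def)
    then show ?thesis by linarith
  qed
  then have "smooth_fun (\<lambda>t. ?a t * (1 / (?a t + ?b t)))"
    by (intro smooth_fun_mult smooth_fun_inverse smooth_fun_add a b)
  then show ?thesis
    unfolding smooth_step_def[abs_def] by simp
qed

lemma smooth_step_eq_0: "t \<le> 1/2 \<Longrightarrow> smooth_step t = 0"
  by (simp add: smooth_step_def expinv_poly_def)

lemma smooth_step_eq_1: "t \<ge> 2 \<Longrightarrow> smooth_step t = 1"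
  by (simp add: smooth_step_def expinv_poly_def)

definition step_deriv :: "nat \<Rightarrow> real \<Rightarrow> real" where
  "step_deriv k = (deriv ^^ k) smooth_step"

lemma step_deriv_0 [simp]: "step_deriv 0 = smooth_step"
  by (simp add: step_deriv_def)

lemma has_real_derivative_step_deriv: "(step_deriv k has_real_derivative step_deriv (Suc k) t) (at t)"
  unfolding step_deriv_def by (rule smooth_fun_higher_deriv(2)[OF smooth_fun_smooth_step])

lemma step_deriv_below: "t < 1/2 \<Longrightarrow> step_deriv k t = 0"
  using higher_deriv_locally_const[OF smooth_fun_smooth_step, of "{..<1/2}" 0 t k]
  by (simp add: step_deriv_def smooth_step_eq_0)

lemma step_deriv_above: "t > 2 \<Longrightarrow> step_deriv k t = (if k = 0 then 1 else 0)"
  using higher_deriv_locally_const[OF smooth_fun_smooth_step, of "{2<..}" 1 t k]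
  by (simp add: step_deriv_def smooth_step_eq_1)

lemma step_deriv_bounded: "\<exists>M. \<forall>t. \<bar>step_deriv k t\<bar> \<le> M"
proof -
  have "\<exists>M. \<forall>t. 1/2 \<le> t \<and> t \<le> 2 \<longrightarrow> \<bar>step_deriv k t\<bar> \<le> M"
    using has_real_derivative_step_deriv
    by (intro isCont_bounded allI impI isCont_rabs DERIV_isCont) auto
  then obtain M where M: "\<And>t. 1/2 \<le> t \<Longrightarrow> t \<le> 2 \<Longrightarrow> \<bar>step_deriv k t\<bar> \<le> M"
    by blast
  have "\<bar>step_deriv k t\<bar> \<le> max M 1" for t
    using M[of t] step_deriv_below[of t k] step_deriv_above[of t k]
    by (cases "t < 1/2 \<or> t > 2") auto
  then show ?thesis by blast
qed

section \<open>Partial derivatives and extension across the negative y-axis\<close>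

definition partials_on :: "(real \<times> real) set \<Rightarrow> (nat \<Rightarrow> nat \<Rightarrow> real \<times> real \<Rightarrow> real) \<Rightarrow> bool" where
  "partials_on U D \<longleftrightarrow>
     (\<forall>i j. continuous_on U (D i j)) \<and>
     (\<forall>i j x y. (x, y) \<in> U \<longrightarrow>
        ((\<lambda>t. D i j (t, y)) has_real_derivative D (Suc i) j (x, y)) (at x) \<and>
        ((\<lambda>t. D i j (x, t)) has_real_derivative D i (Suc j) (x, y)) (at y))"

lemma smooth_on_iff_partials_on:
  "smooth_on U f \<longleftrightarrow> (\<exists>D. partials_on U D \<and> (\<forall>p\<in>U. D 0 0 p = f p))"
  unfolding smooth_on_def partials_on_def by blast

lemma smooth_on_cong: "smooth_on V f \<Longrightarrow> (\<And>p. p \<in> V \<Longrightarrow> f p = g p) \<Longrightarrow> smooth_on V g"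
  unfolding smooth_on_iff_partials_on by metis

lemma partials_on_continuous_on: "partials_on U D \<Longrightarrow> continuous_on U (D i j)"
  by (simp add: partials_on_def)

lemma partials_on_dx:
  "partials_on U D \<Longrightarrow> (x, y) \<in> U \<Longrightarrow>
    ((\<lambda>t. D i j (t, y)) has_real_derivative D (Suc i) j (x, y)) (at x)"
  by (simp add: partials_on_def)

lemma partials_on_dy:
  "partials_on U D \<Longrightarrow> (x, y) \<in> U \<Longrightarrow>
    ((\<lambda>t. D i j (x, t)) has_real_derivative D i (Suc j) (x, y)) (at y)"
  by (simp add: partials_on_def)

lemma partials_on_subset: "partials_on U D \<Longrightarrow> V \<subseteq> U \<Longrightarrow> partials_on V D"
  unfolding partials_on_def by (meson continuous_on_subset subsetD)

lemma eventually_nhds_Pair_fst: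
  "\<forall>\<^sub>F q in nhds (x, y). P q \<Longrightarrow> \<forall>\<^sub>F t in nhds x. P (t, y)"
  by (erule eventually_compose_filterlim) (auto intro: tendsto_Pair filterlim_ident)

lemma eventually_nhds_Pair_snd:
  "\<forall>\<^sub>F q in nhds (x, y). P q \<Longrightarrow> \<forall>\<^sub>F t in nhds y. P (x, t)"
  by (erule eventually_compose_filterlim) (auto intro: tendsto_Pair filterlim_ident)

lemma has_real_derivative_zero_if_quadratic_bound:
  fixes g :: "real \<Rightarrow> real"
  assumes "g a = 0" and "\<forall>\<^sub>F t in nhds a. \<bar>g t\<bar> \<le> C * (t - a)\<^sup>2"
  shows "(g has_real_derivative 0) (at a)"
proof -
  have shift: "filterlim (\<lambda>h. a + h) (nhds a) (at 0)"
    using tendsto_add[OF tendsto_const[of a] tendsto_ident_at[of 0 UNIV]] by simp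
  have "\<forall>\<^sub>F h in at 0. \<bar>g (a + h)\<bar> \<le> C * h\<^sup>2"
    using eventually_compose_filterlim[OF assms(2) shift] by simp
  then have "\<forall>\<^sub>F h in at 0. norm ((g (a + h) - g a) / h) \<le> \<bar>C\<bar> * \<bar>h\<bar>"
  proof (rule eventually_mono)
    fix h :: real assume "\<bar>g (a + h)\<bar> \<le> C * h\<^sup>2"
    also have "C * h\<^sup>2 \<le> (\<bar>C\<bar> * \<bar>h\<bar>) * \<bar>h\<bar>"
      by (simp add: power2_eq_square abs_mult_self_eq mult.assoc mult_right_mono)
    finally show "norm ((g (a + h) - g a) / h) \<le> \<bar>C\<bar> * \<bar>h\<bar>"
      using assms(1) by (cases "h = 0") (simp_all add: abs_divide divide_le_eq)
  qed
  moreover have "((\<lambda>h. \<bar>C\<bar> * \<bar>h\<bar>) \<longlongrightarrow> 0) (at (0::real))"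
    by (auto intro!: tendsto_eq_intros)
  ultimately have "((\<lambda>h. (g (a + h) - g a) / h) \<longlongrightarrow> 0) (at 0)"
    by (rule Lim_null_comparison)
  then show ?thesis by (simp add: DERIV_def)
qed

text \<open>The l1-distance to the quadrant \<open>{x \<ge> 0, y \<le> 0}\<close>.\<close>

definition quadrant_dist :: "real \<times> real \<Rightarrow> real" where
  "quadrant_dist p = max (- fst p) 0 + max (snd p) 0"

lemma quadrant_dist_nonneg: "quadrant_dist p \<ge> 0"
  by (simp add: quadrant_dist_def)

lemma isCont_quadrant_dist: "isCont quadrant_dist p"
  unfolding quadrant_dist_def[abs_def] by (intro continuous_intros)

definition neg_y_axis :: "(real \<times> real) set" where
  "neg_y_axis = {p. fst p = 0 \<and> snd p \<le> 0}"

lemma closed_neg_y_axis: "closed neg_y_axis"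
  unfolding neg_y_axis_def by (intro closed_Collect_conj closed_Collect_eq closed_Collect_le continuous_intros)

lemma quadrant_dist_neg_y_axis: "p \<in> neg_y_axis \<Longrightarrow> quadrant_dist p = 0"
  by (auto simp: neg_y_axis_def quadrant_dist_def)

lemma vanishing_to_second_order_at_neg_y_axis:
  assumes V: "open V" and C: "C \<ge> 0" and bound: "\<And>q. q \<in> V \<Longrightarrow> \<bar>f q\<bar> \<le> C * quadrant_dist q ^ 2"
    and p: "(x, y) \<in> V" "(x, y) \<in> neg_y_axis"
  shows "isCont f (x, y)"
    and "((\<lambda>t. f (t, y)) has_real_derivative 0) (at x)"
    and "((\<lambda>t. f (x, t)) has_real_derivative 0) (at y)"
proof -
  have axis: "x = 0" "y \<le> 0"
    using p(2) by (auto simp: neg_y_axis_def)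
  have f0: "f (x, y) = 0"
    using bound[OF p(1)] quadrant_dist_neg_y_axis[OF p(2)] by simp
  have "\<forall>\<^sub>F q in at (x, y). norm (f q) \<le> C * quadrant_dist q ^ 2"
    using eventually_at_in_open'[OF V p(1)] by eventually_elim (simp add: bound)
  moreover have "((\<lambda>q. C * quadrant_dist q ^ 2) \<longlongrightarrow> 0) (at (x, y))"
    using isCont_quadrant_dist[of "(x, y)"] quadrant_dist_neg_y_axis[OF p(2)]
    by (metis isCont_def mult_zero_right power_zero_numeral tendsto_mult_left tendsto_power)
  ultimately have "(f \<longlongrightarrow> 0) (at (x, y))"
    by (rule Lim_null_comparison)
  then show "isCont f (x, y)"
    using f0 by (simp add: isCont_def)
  have square_bound: "C * quadrant_dist q ^ 2 \<le> C * d\<^sup>2" if "quadrant_dist q \<le> \<bar>d\<bar>" for q d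
  proof -
    have "quadrant_dist q ^ 2 \<le> \<bar>d\<bar> ^ 2"
      using that quadrant_dist_nonneg[of q] by (intro power_mono) auto
    then show ?thesis using C by (simp add: mult_left_mono)
  qed
  show "((\<lambda>t. f (t, y)) has_real_derivative 0) (at x)"
  proof (rule has_real_derivative_zero_if_quadratic_bound)
    show "f (x, y) = 0" by (rule f0)
    show "\<forall>\<^sub>F t in nhds x. \<bar>f (t, y)\<bar> \<le> C * (t - x)\<^sup>2"
      using eventually_nhds_Pair_fst[OF eventually_nhds_in_open[OF V p(1)]]
    proof eventually_elim
      case (elim t)
      have "quadrant_dist (t, y) \<le> \<bar>t - x\<bar>"
        using axis by (auto simp: quadrant_dist_def)
      then have "C * quadrant_dist (t, y) ^ 2 \<le> C * (t - x)\<^sup>2"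
        by (rule square_bound)
      then show ?case
        using bound[OF elim] by linarith
    qed
  qed
  show "((\<lambda>t. f (x, t)) has_real_derivative 0) (at y)"
  proof (rule has_real_derivative_zero_if_quadratic_bound)
    show "f (x, y) = 0" by (rule f0)
    show "\<forall>\<^sub>F t in nhds y. \<bar>f (x, t)\<bar> \<le> C * (t - y)\<^sup>2"
      using eventually_nhds_Pair_snd[OF eventually_nhds_in_open[OF V p(1)]]
    proof eventually_elim
      case (elim t)
      have "quadrant_dist (x, t) \<le> \<bar>t - y\<bar>"
        using axis by (auto simp: quadrant_dist_def)
      then have "C * quadrant_dist (x, t) ^ 2 \<le> C * (t - y)\<^sup>2"
        by (rule square_bound)
      then show ?case
        using bound[OF elim] by linarith
    qed
  qed
qed

lemma partials_on_extend_by_zero: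
  assumes V: "open V" and E: "partials_on (V - neg_y_axis) E"
    and flat: "\<And>i j. \<exists>C. \<forall>q\<in>V - neg_y_axis. \<bar>E i j q\<bar> \<le> C * quadrant_dist q ^ 2"
  shows "partials_on V (\<lambda>i j q. if q \<in> neg_y_axis then 0 else E i j q)"
proof -
  define F where "F i j q = (if q \<in> neg_y_axis then 0 else E i j q)" for i j q
  have W: "open (V - neg_y_axis)"
    using V closed_neg_y_axis by (rule open_Diff)
  have F_bound: "\<exists>C\<ge>0. \<forall>q\<in>V. \<bar>F i j q\<bar> \<le> C * quadrant_dist q ^ 2" for i j
  proof -
    obtain C where C: "\<forall>q\<in>V - neg_y_axis. \<bar>E i j q\<bar> \<le> C * quadrant_dist q ^ 2"
      using flat by blast
    have "\<bar>F i j q\<bar> \<le> \<bar>C\<bar> * quadrant_dist q ^ 2" if "q \<in> V" for q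
    proof (cases "q \<in> neg_y_axis")
      case False
      then have "\<bar>E i j q\<bar> \<le> C * quadrant_dist q ^ 2" using C that by blast
      also have "\<dots> \<le> \<bar>C\<bar> * quadrant_dist q ^ 2" by (rule mult_right_mono) simp_all
      finally show ?thesis using False by (simp add: F_def)
    qed (simp add: F_def)
    then show ?thesis by (intro exI[of _ "\<bar>C\<bar>"]) simp
  qed
  have F_eq: "\<forall>\<^sub>F q in nhds (x, y). E i j q = F i j q" if "(x, y) \<in> V - neg_y_axis" for i j x y
    using eventually_nhds_in_open[OF W that] by eventually_elim (simp add: F_def)
  have "isCont (F i j) (x, y)
      \<and> ((\<lambda>t. F i j (t, y)) has_real_derivative F (Suc i) j (x, y)) (at x)
      \<and> ((\<lambda>t. F i j (x, t)) has_real_derivative F i (Suc j) (x, y)) (at y)"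
    if xy: "(x, y) \<in> V" for i j x y
  proof (cases "(x, y) \<in> neg_y_axis")
    case False
    then have xy': "(x, y) \<in> V - neg_y_axis" using xy by simp
    have "isCont (E i j) (x, y)"
      using xy' W partials_on_continuous_on[OF E] by (simp add: continuous_on_eq_continuous_at)
    then have "isCont (F i j) (x, y)"
      using isCont_cong[OF F_eq[OF xy']] by simp
    moreover have "((\<lambda>t. F i j (t, y)) has_real_derivative E (Suc i) j (x, y)) (at x)"
      using DERIV_cong_ev[OF refl eventually_nhds_Pair_fst[OF F_eq[OF xy']] refl]
        partials_on_dx[OF E xy'] by simp
    moreover have "((\<lambda>t. F i j (x, t)) has_real_derivative E i (Suc j) (x, y)) (at y)"
      using DERIV_cong_ev[OF refl eventually_nhds_Pair_snd[OF F_eq[OF xy']] refl]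
        partials_on_dy[OF E xy'] by simp
    ultimately show ?thesis
      using False by (simp add: F_def)
  next
    case True
    obtain C where "C \<ge> 0" "\<forall>q\<in>V. \<bar>F i j q\<bar> \<le> C * quadrant_dist q ^ 2"
      using F_bound by blast
    from vanishing_to_second_order_at_neg_y_axis[OF V this(1) _ xy True, of "F i j"] this(2)
    show ?thesis using True by (simp add: F_def)
  qed
  then show ?thesis
    unfolding partials_on_def F_def[symmetric]
    by (auto intro: continuous_at_imp_continuous_on)
qed

section \<open>Flatness at the quadrant\<close>

definition flat_on :: "(real \<times> real) set \<Rightarrow> (real \<times> real \<Rightarrow> real) \<Rightarrow> bool" where
  "flat_on K f \<longleftrightarrow> (\<forall>N. \<exists>C. \<forall>q\<in>K. \<bar>f q\<bar> \<le> C * quadrant_dist q ^ N)"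

definition moderate_on :: "(real \<times> real) set \<Rightarrow> (real \<times> real \<Rightarrow> real) \<Rightarrow> bool" where
  "moderate_on K f \<longleftrightarrow> (\<exists>C N. \<forall>q\<in>K. \<bar>f q\<bar> * quadrant_dist q ^ N \<le> C)"

lemma flat_on_subset: "flat_on K f \<Longrightarrow> L \<subseteq> K \<Longrightarrow> flat_on L f"
  unfolding flat_on_def by blast

lemma flat_onD:
  assumes "flat_on K f"
  obtains C where "C \<ge> 0" "\<And>q. q \<in> K \<Longrightarrow> \<bar>f q\<bar> \<le> C * quadrant_dist q ^ N"
proof -
  obtain C where C: "\<forall>q\<in>K. \<bar>f q\<bar> \<le> C * quadrant_dist q ^ N"
    using assms by (auto simp: flat_on_def)
  have "\<bar>f q\<bar> \<le> \<bar>C\<bar> * quadrant_dist q ^ N" if "q \<in> K" for q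
    using C that by (meson abs_ge_self mult_right_mono order_trans quadrant_dist_nonneg zero_le_power)
  then show ?thesis using that[of "\<bar>C\<bar>"] by simp
qed

lemma flat_on_add:
  assumes "flat_on K f" and "flat_on K g"
  shows "flat_on K (\<lambda>q. f q + g q)"
  unfolding flat_on_def
proof
  fix N
  obtain C1 where "\<forall>q\<in>K. \<bar>f q\<bar> \<le> C1 * quadrant_dist q ^ N"
    using assms(1) by (auto simp: flat_on_def)
  moreover obtain C2 where "\<forall>q\<in>K. \<bar>g q\<bar> \<le> C2 * quadrant_dist q ^ N"
    using assms(2) by (auto simp: flat_on_def)
  ultimately have "\<forall>q\<in>K. \<bar>f q + g q\<bar> \<le> (C1 + C2) * quadrant_dist q ^ N"
    by (auto simp: distrib_right intro: order_trans[OF abs_triangle_ineq add_mono])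
  then show "\<exists>C. \<forall>q\<in>K. \<bar>f q + g q\<bar> \<le> C * quadrant_dist q ^ N" ..
qed

lemma flat_on_mult_moderate_on:
  assumes "flat_on K f" and "moderate_on K g"
  shows "flat_on K (\<lambda>q. f q * g q)"
  unfolding flat_on_def
proof
  fix N
  obtain C2 M where C2: "\<forall>q\<in>K. \<bar>g q\<bar> * quadrant_dist q ^ M \<le> C2"
    using assms(2) by (auto simp: moderate_on_def)
  obtain C1 where C1: "C1 \<ge> 0" "\<And>q. q \<in> K \<Longrightarrow> \<bar>f q\<bar> \<le> C1 * quadrant_dist q ^ (N + M)"
    using flat_onD[OF assms(1)] by blast
  have "\<bar>f q * g q\<bar> \<le> (C1 * C2) * quadrant_dist q ^ N" if q: "q \<in> K" for q
  proof -
    have "\<bar>f q * g q\<bar> \<le> C1 * quadrant_dist q ^ (N + M) * \<bar>g q\<bar>"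
      unfolding abs_mult using C1(2)[OF q] by (rule mult_right_mono) simp
    also have "\<dots> = C1 * quadrant_dist q ^ N * (\<bar>g q\<bar> * quadrant_dist q ^ M)"
      by (simp add: power_add algebra_simps)
    also have "\<dots> \<le> C1 * quadrant_dist q ^ N * C2"
      using C1(1) C2 q quadrant_dist_nonneg by (intro mult_left_mono) auto
    finally show ?thesis by (simp add: algebra_simps)
  qed
  then show "\<exists>C. \<forall>q\<in>K. \<bar>f q * g q\<bar> \<le> C * quadrant_dist q ^ N" by blast
qed

lemma flat_on_imp_moderate_on: "flat_on K f \<Longrightarrow> moderate_on K f"
  unfolding flat_on_def moderate_on_def by (metis mult.right_neutral power_0)

lemma moderate_on_const: "moderate_on K (\<lambda>q. c)"
  unfolding moderate_on_def by (intro exI[of _ "\<bar>c\<bar>"] exI[of _ 0]) simp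

lemma moderate_on_mult:
  assumes "moderate_on K f" and "moderate_on K g"
  shows "moderate_on K (\<lambda>q. f q * g q)"
proof -
  obtain C1 N1 where C1: "\<forall>q\<in>K. \<bar>f q\<bar> * quadrant_dist q ^ N1 \<le> C1"
    using assms(1) by (auto simp: moderate_on_def)
  obtain C2 N2 where C2: "\<forall>q\<in>K. \<bar>g q\<bar> * quadrant_dist q ^ N2 \<le> C2"
    using assms(2) by (auto simp: moderate_on_def)
  have "\<bar>f q * g q\<bar> * quadrant_dist q ^ (N1 + N2) \<le> C1 * C2" if q: "q \<in> K" for q
  proof -
    have "\<bar>f q * g q\<bar> * quadrant_dist q ^ (N1 + N2) =
        (\<bar>f q\<bar> * quadrant_dist q ^ N1) * (\<bar>g q\<bar> * quadrant_dist q ^ N2)"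
      by (simp add: power_add abs_mult algebra_simps)
    also have "\<dots> \<le> C1 * C2"
    proof (rule mult_mono)
      have "0 \<le> \<bar>f q\<bar> * quadrant_dist q ^ N1" by (simp add: quadrant_dist_nonneg)
      then show "0 \<le> C1" using C1 q by (meson order_trans)
    qed (use C1 C2 q quadrant_dist_nonneg in auto)
    finally show ?thesis .
  qed
  then show ?thesis unfolding moderate_on_def by blast
qed

lemma moderate_on_add:
  assumes K: "\<And>q. q \<in> K \<Longrightarrow> quadrant_dist q \<le> 1"
    and "moderate_on K f" and "moderate_on K g"
  shows "moderate_on K (\<lambda>q. f q + g q)"
proof -
  obtain C1 N1 where C1: "\<forall>q\<in>K. \<bar>f q\<bar> * quadrant_dist q ^ N1 \<le> C1"
    using assms(2) by (auto simp: moderate_on_def)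
  obtain C2 N2 where C2: "\<forall>q\<in>K. \<bar>g q\<bar> * quadrant_dist q ^ N2 \<le> C2"
    using assms(3) by (auto simp: moderate_on_def)
  have "\<bar>f q + g q\<bar> * quadrant_dist q ^ (N1 + N2) \<le> C1 + C2" if q: "q \<in> K" for q
  proof -
    have d: "0 \<le> quadrant_dist q ^ N" "quadrant_dist q ^ N \<le> 1" for N
      using power_le_one[OF quadrant_dist_nonneg K[OF q]] by (simp_all add: quadrant_dist_nonneg)
    have "\<bar>f q + g q\<bar> * quadrant_dist q ^ (N1 + N2)
        \<le> (\<bar>f q\<bar> + \<bar>g q\<bar>) * (quadrant_dist q ^ N1 * quadrant_dist q ^ N2)"
      unfolding power_add using d by (intro mult_right_mono abs_triangle_ineq) simp
    also have "\<dots> = (\<bar>f q\<bar> * quadrant_dist q ^ N1) * quadrant_dist q ^ N2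
        + (\<bar>g q\<bar> * quadrant_dist q ^ N2) * quadrant_dist q ^ N1"
      by (simp add: algebra_simps)
    also have "\<dots> \<le> \<bar>f q\<bar> * quadrant_dist q ^ N1 + \<bar>g q\<bar> * quadrant_dist q ^ N2"
      using d by (intro add_mono mult_left_le) simp_all
    also have "\<dots> \<le> C1 + C2"
      using C1 C2 q by (intro add_mono) auto
    finally show ?thesis .
  qed
  then show ?thesis unfolding moderate_on_def by blast
qed

lemma has_real_derivative_zero_if_eventually_zero:
  assumes "(f has_real_derivative L) (at x)" and "\<forall>\<^sub>F t in at x within S. f t = 0"
    and "f x = 0" and "at x within S \<noteq> bot"
  shows "L = 0"
proof -
  have "((\<lambda>t. (f t - f x) / (t - x)) \<longlongrightarrow> L) (at x within S)"
    using has_field_derivative_at_within[OF assms(1)] by (simp add: has_field_derivative_iff)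
  moreover have "((\<lambda>t. (f t - f x) / (t - x)) \<longlongrightarrow> 0) (at x within S)"
    by (rule Lim_transform_eventually[OF tendsto_const])
      (use assms(2,3) in \<open>auto elim: eventually_mono\<close>)
  ultimately show ?thesis
    using assms(4) tendsto_unique by blast
qed

text \<open>Differentiate from the right in x and from the left in y, so as to stay in the quadrant.\<close>

lemma partials_on_vanish_on_quadrant:
  assumes U: "open U" and D: "partials_on U D"
    and D00: "\<And>x y. (x, y) \<in> U \<Longrightarrow> x \<ge> 0 \<Longrightarrow> y \<le> 0 \<Longrightarrow> D 0 0 (x, y) = 0"
  shows "(x, y) \<in> U \<Longrightarrow> x \<ge> 0 \<Longrightarrow> y \<le> 0 \<Longrightarrow> D i j (x, y) = 0"
proof (induction i arbitrary: x y)
  case 0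
  then show ?case
  proof (induction j arbitrary: y)
    case 0
    then show ?case by (rule D00)
  next
    case (Suc j)
    show ?case
    proof (rule has_real_derivative_zero_if_eventually_zero[OF partials_on_dy[OF D Suc.prems(1)]])
      have "\<forall>\<^sub>F t in at y within {..<y}. (x, t) \<in> U \<and> t < y"
        using eventually_nhds_Pair_snd[OF eventually_nhds_in_open[OF U Suc.prems(1)]]
        by (auto simp: eventually_at_filter elim!: eventually_mono)
      then show "\<forall>\<^sub>F t in at y within {..<y}. D 0 j (x, t) = 0"
        by (rule eventually_mono) (use Suc.prems in \<open>auto intro!: Suc.IH\<close>)
    qed (use Suc in auto)
  qed
next
  case (Suc i)
  show ?case
  proof (rule has_real_derivative_zero_if_eventually_zero[OF partials_on_dx[OF D Suc.prems(1)]])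
    have "\<forall>\<^sub>F t in at x within {x<..}. (t, y) \<in> U \<and> x < t"
      using eventually_nhds_Pair_fst[OF eventually_nhds_in_open[OF U Suc.prems(1)]]
      by (auto simp: eventually_at_filter elim!: eventually_mono)
    then show "\<forall>\<^sub>F t in at x within {x<..}. D i j (t, y) = 0"
      by (rule eventually_mono) (use Suc.prems in \<open>auto intro!: Suc.IH\<close>)
  qed (use Suc in auto)
qed

lemma abs_diff_le_by_derivative_bound:
  fixes f f' :: "real \<Rightarrow> real"
  assumes "a \<le> b" and "\<And>t. a \<le> t \<Longrightarrow> t \<le> b \<Longrightarrow> (f has_real_derivative f' t) (at t)"
    and "\<And>t. a \<le> t \<Longrightarrow> t \<le> b \<Longrightarrow> \<bar>f' t\<bar> \<le> M"
  shows "\<bar>f b - f a\<bar> \<le> (b - a) * M"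
proof (cases "a = b")
  case False
  then have "a < b" using assms(1) by simp
  then obtain z where z: "a < z" "z < b" "f b - f a = (b - a) * f' z"
    using MVT2[OF _ assms(2)] by (metis less_eq_real_def)
  then have "\<bar>f b - f a\<bar> = (b - a) * \<bar>f' z\<bar>" by (simp add: abs_mult)
  also have "\<dots> \<le> (b - a) * M"
    using assms(3)[of z] z by (intro mult_left_mono) auto
  finally show ?thesis .
qed simp

text \<open>The path from \<open>(x, y)\<close> to the quadrant, first horizontally to \<open>(max x 0, y)\<close> and then
  vertically to \<open>(max x 0, min y 0)\<close>, has length \<open>quadrant_dist (x, y)\<close> and stays in the square,
  where the distance only decreases along it.\<close>

lemma abs_le_quadrant_dist_Suc:
  fixes f fx fy :: "real \<times> real \<Rightarrow> real"
  assumes dx: "\<And>x y. (x, y) \<in> {-r..r} \<times> {-r..r} \<Longrightarrow>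
      ((\<lambda>t. f (t, y)) has_real_derivative fx (x, y)) (at x)"
    and dy: "\<And>x y. (x, y) \<in> {-r..r} \<times> {-r..r} \<Longrightarrow>
      ((\<lambda>t. f (x, t)) has_real_derivative fy (x, y)) (at y)"
    and C: "C1 \<ge> 0" "C2 \<ge> 0"
    and bound: "\<And>q. q \<in> {-r..r} \<times> {-r..r} \<Longrightarrow> \<bar>fx q\<bar> \<le> C1 * quadrant_dist q ^ N"
      "\<And>q. q \<in> {-r..r} \<times> {-r..r} \<Longrightarrow> \<bar>fy q\<bar> \<le> C2 * quadrant_dist q ^ N"
    and vanish: "\<And>x y. (x, y) \<in> {-r..r} \<times> {-r..r} \<Longrightarrow> x \<ge> 0 \<Longrightarrow> y \<le> 0 \<Longrightarrow> f (x, y) = 0"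
    and q: "(x, y) \<in> {-r..r} \<times> {-r..r}"
  shows "\<bar>f (x, y)\<bar> \<le> (C1 + C2) * quadrant_dist (x, y) ^ Suc N"
proof -
  let ?P = "quadrant_dist (x, y) ^ N" and ?x = "max x 0" and ?y = "min y 0"
  have horizontal: "\<bar>f (?x, y) - f (x, y)\<bar> \<le> (?x - x) * (C1 * ?P)"
  proof (rule abs_diff_le_by_derivative_bound)
    fix t assume t: "x \<le> t" "t \<le> ?x"
    then have "(t, y) \<in> {-r..r} \<times> {-r..r}" using q by auto
    moreover have "quadrant_dist (t, y) ^ N \<le> ?P"
      using t by (intro power_mono quadrant_dist_nonneg) (auto simp: quadrant_dist_def)
    ultimately show "\<bar>fx (t, y)\<bar> \<le> C1 * ?P"
      using C(1) bound(1) by (meson mult_left_mono order_trans)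
    show "((\<lambda>t. f (t, y)) has_real_derivative fx (t, y)) (at t)"
      using \<open>(t, y) \<in> _\<close> by (rule dx)
  qed simp
  have vertical: "\<bar>f (?x, y) - f (?x, ?y)\<bar> \<le> (y - ?y) * (C2 * ?P)"
  proof (rule abs_diff_le_by_derivative_bound)
    fix t assume t: "?y \<le> t" "t \<le> y"
    then have "(?x, t) \<in> {-r..r} \<times> {-r..r}" using q by auto
    moreover have "quadrant_dist (?x, t) ^ N \<le> ?P"
      using t by (intro power_mono quadrant_dist_nonneg) (auto simp: quadrant_dist_def)
    ultimately show "\<bar>fy (?x, t)\<bar> \<le> C2 * ?P"
      using C(2) bound(2) by (meson mult_left_mono order_trans)
    show "((\<lambda>t. f (?x, t)) has_real_derivative fy (?x, t)) (at t)"
      using \<open>(?x, t) \<in> _\<close> by (rule dy)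
  qed simp
  have "f (?x, ?y) = 0"
    using q by (intro vanish) auto
  then have "\<bar>f (x, y)\<bar> \<le> (?x - x) * (C1 * ?P) + (y - ?y) * (C2 * ?P)"
    using horizontal vertical by linarith
  also have "\<dots> \<le> (C1 + C2) * (((?x - x) + (y - ?y)) * ?P)"
  proof -
    have "0 \<le> (?x - x) * (C2 * ?P)" "0 \<le> (y - ?y) * (C1 * ?P)"
      using C quadrant_dist_nonneg[of "(x, y)"] by auto
    then show ?thesis by (simp add: algebra_simps)
  qed
  also have "(?x - x) + (y - ?y) = quadrant_dist (x, y)"
    by (auto simp: quadrant_dist_def)
  finally show ?thesis by simp
qed

lemma partials_on_flat_at_quadrant:
  assumes D: "partials_on U D" and square: "{-r..r} \<times> {-r..r} \<subseteq> U"
    and vanish: "\<And>i j x y. (x, y) \<in> U \<Longrightarrow> x \<ge> 0 \<Longrightarrow> y \<le> 0 \<Longrightarrow> D i j (x, y) = 0"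
  shows "flat_on ({-r..r} \<times> {-r..r}) (D i j)"
proof -
  have "\<exists>C\<ge>0. \<forall>q\<in>{-r..r} \<times> {-r..r}. \<bar>D i j q\<bar> \<le> C * quadrant_dist q ^ N" for N
  proof (induction N arbitrary: i j)
    case 0
    have "compact (D i j ` ({-r..r} \<times> {-r..r}))"
      using partials_on_continuous_on[OF D] square
      by (intro compact_continuous_image compact_Times compact_Icc) (rule continuous_on_subset)
    then obtain a where "\<forall>z\<in>D i j ` ({-r..r} \<times> {-r..r}). norm z \<le> a"
      using compact_imp_bounded bounded_iff by metis
    then show ?case by (intro exI[of _ "max a 0"]) force
  next
    case (Suc N)
    obtain C1 where C1: "C1 \<ge> 0"
      "\<forall>q\<in>{-r..r} \<times> {-r..r}. \<bar>D (Suc i) j q\<bar> \<le> C1 * quadrant_dist q ^ N"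
      using Suc.IH by blast
    obtain C2 where C2: "C2 \<ge> 0"
      "\<forall>q\<in>{-r..r} \<times> {-r..r}. \<bar>D i (Suc j) q\<bar> \<le> C2 * quadrant_dist q ^ N"
      using Suc.IH by blast
    have U: "(x, y) \<in> U" if "(x, y) \<in> {-r..r} \<times> {-r..r}" for x y
      using square that by blast
    have "\<bar>D i j (x, y)\<bar> \<le> (C1 + C2) * quadrant_dist (x, y) ^ Suc N"
      if "(x, y) \<in> {-r..r} \<times> {-r..r}" for x y
      by (rule abs_le_quadrant_dist_Suc[where fx="D (Suc i) j" and fy="D i (Suc j)"])
        (use C1 C2 that partials_on_dx[OF D U] partials_on_dy[OF D U] vanish[OF U] in blast)+
    then show ?case using C1 C2 by (intro exI[of _ "C1 + C2"]) auto
  qed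
  then show ?thesis
    unfolding flat_on_def by blast
qed

section \<open>The cutoff and its partial derivatives\<close>

lemma step_deriv_chain [derivative_intros]:
  "(g has_real_derivative g') (at x within s) \<Longrightarrow>
   ((\<lambda>t. step_deriv k (g t)) has_real_derivative step_deriv (Suc k) (g x) * g') (at x within s)"
  by (rule DERIV_chain'[OF _ has_real_derivative_step_deriv])

lemma isCont_step_deriv [continuous_intros]: "isCont f p \<Longrightarrow> isCont (\<lambda>q. step_deriv k (f q)) p"
  by (rule isCont_o2[OF _ DERIV_isCont[OF has_real_derivative_step_deriv]])

definition cutoff :: "real \<times> real \<Rightarrow> real" where
  "cutoff p = (if fst p < 0 then smooth_step (snd p / - fst p) else 1)"

lemma cutoff_right_half_plane: "fst p \<ge> 0 \<Longrightarrow> cutoff p = 1"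
  by (simp add: cutoff_def)

lemma cutoff_lower_left_quadrant:
  assumes "fst p < 0" and "snd p \<le> 0"
  shows "cutoff p = 0"
proof -
  have "snd p / - fst p \<le> 0"
    using assms by (intro divide_nonpos_pos) auto
  then have "snd p / - fst p \<le> 1/2" by linarith
  then show ?thesis
    using assms(1) smooth_step_eq_0 by (simp only: cutoff_def if_True)
qed

lemma mult_cutoff_lower_half_plane:
  assumes "snd p \<le> 0" and "fst p \<ge> 0 \<Longrightarrow> f p = 0"
  shows "f p * cutoff p = 0"
  using assms cutoff_lower_left_quadrant by (cases "fst p < 0") auto

text \<open>Every partial derivative of \<open>cutoff\<close> is a linear combination of these terms. The factor
  \<open>(-x) ^ -n\<close> never arises together with \<open>k = 0\<close> and is dropped there.\<close>

fun cutoff_term :: "nat \<Rightarrow> nat \<Rightarrow> nat \<Rightarrow> real \<times> real \<Rightarrow> real" where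
  "cutoff_term 0 m n p = cutoff p * snd p ^ m"
| "cutoff_term (Suc k) m n p =
    (if fst p < 0 then step_deriv (Suc k) (snd p / - fst p) * snd p ^ m * (1 / - fst p) ^ n else 0)"

lemma cutoff_term_right_half_plane:
  "fst p \<ge> 0 \<Longrightarrow> cutoff_term k m n p = (if k = 0 then snd p ^ m else 0)"
  by (cases k) (auto simp: cutoff_def)

lemma cutoff_term_above_cone:
  assumes "fst p < 0" and "snd p / - fst p > 2"
  shows "cutoff_term k m n p = (if k = 0 then snd p ^ m else 0)"
proof -
  have "step_deriv k (snd p / - fst p) = (if k = 0 then 1 else 0)"
    using assms(2) by (rule step_deriv_above)
  then show ?thesis
    using assms(1) by (cases k) (simp_all add: cutoff_def)
qed

text \<open>Near the positive y-axis this uses the open cone \<open>y > -2 x\<close>, on which the step is already 1.\<close>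

lemma eventually_cutoff_term_trivial:
  assumes "fst p \<ge> 0" and "p \<notin> neg_y_axis"
  shows "\<forall>\<^sub>F q in nhds p. cutoff_term k m n q = (if k = 0 then snd q ^ m else 0)"
proof (cases "fst p > 0")
  case True
  have "open {q :: real \<times> real. 0 < fst q}"
    by (intro open_Collect_less continuous_intros)
  from eventually_nhds_in_open[OF this, of p] True
  have "\<forall>\<^sub>F q in nhds p. 0 < fst q" by simp
  then show ?thesis
    by eventually_elim (simp add: cutoff_term_right_half_plane)
next
  case False
  then have p: "fst p = 0" "snd p > 0"
    using assms by (auto simp: neg_y_axis_def)
  have "open {q. - snd p / 4 < fst q \<and> snd p / 2 < snd q}"
    by (intro open_Collect_conj open_Collect_less continuous_intros)
  from eventually_nhds_in_open[OF this, of p] p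
  have "\<forall>\<^sub>F q in nhds p. - snd p / 4 < fst q \<and> snd p / 2 < snd q" by simp
  then show ?thesis
  proof eventually_elim
    case (elim q)
    show ?case
    proof (cases "fst q < 0")
      case True
      have "2 * (- fst q) < snd q" using elim p by linarith
      then have "snd q / - fst q > 2"
        using True by (simp only: pos_less_divide_eq[of "- fst q"] neg_0_less_iff_less)
      then show ?thesis by (rule cutoff_term_above_cone[OF True])
    qed (simp add: cutoff_term_right_half_plane)
  qed
qed

lemma eventually_cutoff_term_left_half_plane:
  assumes "fst p < 0"
  shows "\<forall>\<^sub>F q in nhds p. cutoff_term k m n q =
    step_deriv k (snd q / - fst q) * snd q ^ m * (if k = 0 then 1 else (1 / - fst q) ^ n)"
proof -
  have "open {q :: real \<times> real. fst q < 0}"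
    by (intro open_Collect_less continuous_intros)
  from eventually_nhds_in_open[OF this, of p] assms
  have "\<forall>\<^sub>F q in nhds p. fst q < 0" by simp
  then show ?thesis
    by eventually_elim (cases k; simp add: cutoff_def)
qed

lemma isCont_cutoff_term:
  assumes "p \<notin> neg_y_axis"
  shows "isCont (cutoff_term k m n) p"
proof (cases "fst p < 0")
  case True
  have "isCont (\<lambda>q. step_deriv k (snd q / - fst q) * snd q ^ m *
      (if k = 0 then 1 else (1 / - fst q) ^ n)) p"
    using True by (cases "k = 0") (auto simp del: step_deriv_0 intro!: continuous_intros)
  then show ?thesis
    using isCont_cong[OF eventually_cutoff_term_left_half_plane[OF True]] by blast
next
  case False
  have "isCont (\<lambda>q. if k = 0 then snd q ^ m else 0) p"
    by (cases "k = 0") (auto intro!: continuous_intros)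
  moreover have "fst p \<ge> 0" using False by simp
  ultimately show ?thesis
    using isCont_cong[OF eventually_cutoff_term_trivial[OF _ assms]] by blast
qed

text \<open>The factor \<open>step_deriv k (y / -x)\<close> with \<open>k > 0\<close> vanishes unless \<open>-x / 2 \<le> y \<le> -2 x\<close>, where
  \<open>quadrant_dist (x, y) \<le> -3 x\<close>.\<close>

lemma abs_cutoff_term_Suc_mult_le:
  assumes M: "\<And>t. \<bar>step_deriv (Suc k) t\<bar> \<le> M"
  shows "\<bar>cutoff_term (Suc k) m n (x, y)\<bar> * quadrant_dist (x, y) ^ n \<le> M * \<bar>y\<bar> ^ m * 3 ^ n"
proof (cases "x < 0")
  case False
  have "M \<ge> 0" using M[of 0] by linarith
  then show ?thesis using False by simp
next
  case True
  define s where "s = - x"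
  have s0: "s > 0" using True s_def by simp
  have g: "cutoff_term (Suc k) m n (x, y) = step_deriv (Suc k) (y / s) * y ^ m * (1 / s) ^ n"
    using True s_def by simp
  show ?thesis
  proof (cases "y / s < 1/2 \<or> y / s > 2")
    case True
    then have "step_deriv (Suc k) (y / s) = 0"
      using step_deriv_below step_deriv_above by auto
    moreover have "M \<ge> 0" using M[of 0] by linarith
    ultimately show ?thesis using g by simp
  next
    case False
    then have "1/2 \<le> y / s" "y / s \<le> 2" by auto
    then have "s / 2 \<le> y" "y \<le> 2 * s"
      using s0 by (simp_all add: le_divide_eq divide_le_eq)
    then have "quadrant_dist (x, y) = s + y"
      using s_def s0 by (simp add: quadrant_dist_def)
    then have r: "0 \<le> quadrant_dist (x, y) / s" "quadrant_dist (x, y) / s \<le> 3"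
      using s0 \<open>y \<le> 2 * s\<close> quadrant_dist_nonneg[of "(x, y)"] by (simp_all add: divide_le_eq)
    have "\<bar>cutoff_term (Suc k) m n (x, y)\<bar> * quadrant_dist (x, y) ^ n
        = \<bar>step_deriv (Suc k) (y / s)\<bar> * \<bar>y\<bar> ^ m * ((1 / s) ^ n * quadrant_dist (x, y) ^ n)"
      unfolding g using s0 by (simp add: abs_mult power_abs)
    also have "(1 / s) ^ n * quadrant_dist (x, y) ^ n = (quadrant_dist (x, y) / s) ^ n"
      by (simp add: power_mult_distrib[symmetric])
    also have "\<bar>step_deriv (Suc k) (y / s)\<bar> * \<bar>y\<bar> ^ m * (quadrant_dist (x, y) / s) ^ n
        \<le> M * \<bar>y\<bar> ^ m * 3 ^ n"
      using M[of "y / s"] power_mono[OF r(2) r(1)] zero_le_power[OF r(1)]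
      by (intro mult_mono) auto
    finally show ?thesis .
  qed
qed

lemma moderate_on_cutoff_term:
  assumes "bounded K"
  shows "moderate_on K (cutoff_term k m n)"
proof -
  obtain B where B: "\<forall>q\<in>K. norm q \<le> B"
    using assms bounded_iff by blast
  have ym: "\<bar>snd q\<bar> ^ m \<le> \<bar>B\<bar> ^ m" if "q \<in> K" for q
  proof (rule power_mono)
    have "\<bar>snd q\<bar> \<le> norm q"
      using norm_snd_le[of "snd q" "fst q"] by simp
    then show "\<bar>snd q\<bar> \<le> \<bar>B\<bar>"
      using B that by fastforce
  qed simp
  obtain M where M: "\<And>t. \<bar>step_deriv k t\<bar> \<le> M"
    using step_deriv_bounded by blast
  have M0: "M \<ge> 0" using M[of 0] by linarith
  show ?thesis
  proof (cases k)
    case 0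
    have "\<bar>cutoff_term k m n q\<bar> * quadrant_dist q ^ 0 \<le> max M 1 * \<bar>B\<bar> ^ m" if q: "q \<in> K" for q
    proof -
      have "\<bar>cutoff q\<bar> \<le> max M 1"
        using M[of "snd q / - fst q"] 0 by (auto simp: cutoff_def)
      then show ?thesis
        using 0 ym[OF q] by (simp add: abs_mult power_abs mult_mono)
    qed
    then show ?thesis unfolding moderate_on_def by blast
  next
    case (Suc k')
    have "\<bar>cutoff_term k m n q\<bar> * quadrant_dist q ^ n \<le> M * \<bar>B\<bar> ^ m * 3 ^ n" if q: "q \<in> K" for q
    proof -
      have "\<bar>cutoff_term k m n q\<bar> * quadrant_dist q ^ n \<le> M * \<bar>snd q\<bar> ^ m * 3 ^ n"
        using abs_cutoff_term_Suc_mult_le[of k' M m n "fst q" "snd q"] M Suc by simp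
      also have "\<dots> \<le> M * \<bar>B\<bar> ^ m * 3 ^ n"
        using ym[OF q] M0 by (intro mult_right_mono mult_left_mono) auto
      finally show ?thesis .
    qed
    then show ?thesis unfolding moderate_on_def by blast
  qed
qed

section \<open>Partial derivatives of the product\<close>

text \<open>The partials of \<open>h * cutoff\<close> are values of formal expressions in the partials \<open>D i j\<close> of \<open>h\<close>
  and the cutoff terms, obtained by formal differentiation.\<close>

datatype dterm = Partial nat nat | Cutoff nat nat nat | Const real | Add dterm dterm | Mult dterm dterm

primrec dterm_val :: "(nat \<Rightarrow> nat \<Rightarrow> real \<times> real \<Rightarrow> real) \<Rightarrow> dterm \<Rightarrow> real \<times> real \<Rightarrow> real" where
  "dterm_val D (Partial i j) p = D i j p"
| "dterm_val D (Cutoff k m n) p = cutoff_term k m n p"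
| "dterm_val D (Const c) p = c"
| "dterm_val D (Add e1 e2) p = dterm_val D e1 p + dterm_val D e2 p"
| "dterm_val D (Mult e1 e2) p = dterm_val D e1 p * dterm_val D e2 p"

primrec dterm_dx :: "dterm \<Rightarrow> dterm" where
  "dterm_dx (Partial i j) = Partial (Suc i) j"
| "dterm_dx (Cutoff k m n) =
    (if k = 0 then Cutoff (Suc 0) (Suc m) (Suc (Suc 0))
     else Add (Cutoff (Suc k) (Suc m) (Suc (Suc n))) (Mult (Const (real n)) (Cutoff k m (Suc n))))"
| "dterm_dx (Const c) = Const 0"
| "dterm_dx (Add e1 e2) = Add (dterm_dx e1) (dterm_dx e2)"
| "dterm_dx (Mult e1 e2) = Add (Mult (dterm_dx e1) e2) (Mult e1 (dterm_dx e2))"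

primrec dterm_dy :: "dterm \<Rightarrow> dterm" where
  "dterm_dy (Partial i j) = Partial i (Suc j)"
| "dterm_dy (Cutoff k m n) =  \<comment> \<open>for \<open>m = 0\<close> the truncated \<open>m - 1\<close> is multiplied by 0\<close>
    Add (Cutoff (Suc k) m (if k = 0 then Suc 0 else Suc n)) (Mult (Const (real m)) (Cutoff k (m - 1) n))"
| "dterm_dy (Const c) = Const 0"
| "dterm_dy (Add e1 e2) = Add (dterm_dy e1) (dterm_dy e2)"
| "dterm_dy (Mult e1 e2) = Add (Mult (dterm_dy e1) e2) (Mult e1 (dterm_dy e2))"

text \<open>A syntactic criterion for lying in the ideal generated by the partials of \<open>h\<close>.\<close>

primrec in_partial_ideal :: "dterm \<Rightarrow> bool" where
  "in_partial_ideal (Partial i j) = True"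
| "in_partial_ideal (Cutoff k m n) = False"
| "in_partial_ideal (Const c) = False"
| "in_partial_ideal (Add e1 e2) = (in_partial_ideal e1 \<and> in_partial_ideal e2)"
| "in_partial_ideal (Mult e1 e2) = (in_partial_ideal e1 \<or> in_partial_ideal e2)"

lemma in_partial_ideal_dterm_dx: "in_partial_ideal e \<Longrightarrow> in_partial_ideal (dterm_dx e)"
  by (induction e) auto

lemma in_partial_ideal_dterm_dy: "in_partial_ideal e \<Longrightarrow> in_partial_ideal (dterm_dy e)"
  by (induction e) auto

lemma dterm_val_dx_dy_commute: "dterm_val D (dterm_dx (dterm_dy e)) p = dterm_val D (dterm_dy (dterm_dx e)) p"
proof (induction e)
  case (Cutoff k m n)
  then show ?case by (cases k; cases m) (simp_all add: algebra_simps del: cutoff_term.simps)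
next
  case (Mult e1 e2)
  then show ?case by (simp add: algebra_simps)
qed simp_all

lemma has_real_derivative_cutoff_term_dy:
  "((\<lambda>t. cutoff_term k m n (x, t)) has_real_derivative dterm_val D (dterm_dy (Cutoff k m n)) (x, y)) (at y)"
proof (cases "x < 0")
  case True
  show ?thesis
  proof (cases k)
    case 0
    have "((\<lambda>t. step_deriv 0 (t / - x) * t ^ m) has_real_derivative
        step_deriv (Suc 0) (y / - x) * (1 / - x) * y ^ m + step_deriv 0 (y / - x) * (real m * y ^ (m - 1))) (at y)"
      using True by (auto intro!: derivative_eq_intros simp del: step_deriv_0)
    then show ?thesis using True 0 by (simp add: cutoff_def algebra_simps)
  next
    case (Suc k')
    have "((\<lambda>t. step_deriv (Suc k') (t / - x) * t ^ m * (1 / - x) ^ n) has_real_derivative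
        (step_deriv (Suc (Suc k')) (y / - x) * (1 / - x) * y ^ m
          + step_deriv (Suc k') (y / - x) * (real m * y ^ (m - 1))) * (1 / - x) ^ n) (at y)"
      using True by (auto intro!: derivative_eq_intros simp: field_simps)
    then show ?thesis using True Suc by (simp add: algebra_simps)
  qed
next
  case False
  show ?thesis
  proof (cases k)
    case 0
    have "((\<lambda>t. t ^ m) has_real_derivative real m * y ^ (m - 1)) (at y)"
      by (auto intro!: derivative_eq_intros)
    then show ?thesis using False 0 by (simp add: cutoff_def)
  qed (use False in simp)
qed

lemma has_real_derivative_cutoff_term_dx_left_half_plane:
  assumes "x < 0"
  shows "((\<lambda>t. step_deriv k (y / - t) * y ^ m * (if k = 0 then 1 else (1 / - t) ^ n))
      has_real_derivative dterm_val D (dterm_dx (Cutoff k m n)) (x, y)) (at x)"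
proof (cases k)
  case 0
  then show ?thesis
    using assms by (auto intro!: derivative_eq_intros simp del: step_deriv_0
        simp: power2_eq_square field_simps)
next
  case (Suc k')
  have "((\<lambda>t. step_deriv (Suc k') (y / - t) * y ^ m * (1 / - t) ^ n) has_real_derivative
      step_deriv (Suc (Suc k')) (y / - x) * (y / x\<^sup>2) * y ^ m * (1 / - x) ^ n +
      step_deriv (Suc k') (y / - x) * y ^ m * (real n * (1 / - x) ^ (n - Suc 0) * (1 / x\<^sup>2))) (at x)"
    using assms by (auto intro!: derivative_eq_intros simp: power2_eq_square field_simps)
  also have "step_deriv (Suc (Suc k')) (y / - x) * (y / x\<^sup>2) * y ^ m * (1 / - x) ^ n +
      step_deriv (Suc k') (y / - x) * y ^ m * (real n * (1 / - x) ^ (n - Suc 0) * (1 / x\<^sup>2))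
      = dterm_val D (dterm_dx (Cutoff k m n)) (x, y)"
    using assms Suc by (cases n) (simp_all add: power2_eq_square field_simps)
  finally show ?thesis using Suc by simp
qed

lemma has_real_derivative_cutoff_term_dx:
  assumes "(x, y) \<notin> neg_y_axis"
  shows "((\<lambda>t. cutoff_term k m n (t, y)) has_real_derivative
      dterm_val D (dterm_dx (Cutoff k m n)) (x, y)) (at x)"
proof (cases "x < 0")
  case True
  have "\<forall>\<^sub>F t in nhds x. cutoff_term k m n (t, y) =
      step_deriv k (y / - t) * y ^ m * (if k = 0 then 1 else (1 / - t) ^ n)"
    using eventually_nhds_Pair_fst[OF eventually_cutoff_term_left_half_plane[of "(x, y)" k m n]] True
    by (simp only: fst_conv snd_conv)
  from DERIV_cong_ev[OF refl this refl] has_real_derivative_cutoff_term_dx_left_half_plane[OF True]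
  show ?thesis by blast
next
  case False
  then have "fst (x, y) \<ge> 0" by simp
  from eventually_nhds_Pair_fst[OF eventually_cutoff_term_trivial[OF this assms, of k m n]]
  have "\<forall>\<^sub>F t in nhds x. cutoff_term k m n (t, y) = (if k = 0 then y ^ m else 0)"
    by (simp only: fst_conv snd_conv)
  from DERIV_cong_ev[OF refl this refl] DERIV_const
  have "((\<lambda>t. cutoff_term k m n (t, y)) has_real_derivative 0) (at x)" by blast
  moreover have "dterm_val D (dterm_dx (Cutoff k m n)) (x, y) = 0"
    using False by (simp add: cutoff_term_right_half_plane)
  ultimately show ?thesis by simp
qed

lemma has_real_derivative_dterm_dx:
  assumes "partials_on U D" "(x, y) \<in> U" "(x, y) \<notin> neg_y_axis"
  shows "((\<lambda>t. dterm_val D e (t, y)) has_real_derivative dterm_val D (dterm_dx e) (x, y)) (at x)"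
proof (induction e)
  case (Partial i j)
  then show ?case using partials_on_dx[OF assms(1,2)] by simp
next
  case (Cutoff k m n)
  then show ?case using has_real_derivative_cutoff_term_dx[OF assms(3)] by simp
next
  case (Add e1 e2)
  then show ?case using DERIV_add[OF Add.IH] by simp
next
  case (Mult e1 e2)
  then show ?case using DERIV_mult[OF Mult.IH] by (simp add: algebra_simps)
qed simp

lemma has_real_derivative_dterm_dy:
  assumes "partials_on U D" "(x, y) \<in> U"
  shows "((\<lambda>t. dterm_val D e (x, t)) has_real_derivative dterm_val D (dterm_dy e) (x, y)) (at y)"
proof (induction e)
  case (Partial i j)
  then show ?case using partials_on_dy[OF assms] by simp
next
  case (Cutoff k m n)
  then show ?case using has_real_derivative_cutoff_term_dy by simp
next
  case (Add e1 e2)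
  then show ?case using DERIV_add[OF Add.IH] by simp
next
  case (Mult e1 e2)
  then show ?case using DERIV_mult[OF Mult.IH] by (simp add: algebra_simps)
qed simp

lemma isCont_dterm_val:
  assumes "open U" "partials_on U D" "p \<in> U" "p \<notin> neg_y_axis"
  shows "isCont (dterm_val D e) p"
proof (induction e)
  case (Partial i j)
  then show ?case
    using partials_on_continuous_on[OF assms(2)] assms(1,3) by (simp add: continuous_on_eq_continuous_at)
next
  case (Cutoff k m n)
  then show ?case using isCont_cutoff_term[OF assms(4)] by simp
qed (simp_all add: isCont_add isCont_mult)

lemma dterm_val_dx_cong:
  assumes "partials_on U D" "open W" "W \<subseteq> U - neg_y_axis"
    and "\<And>q. q \<in> W \<Longrightarrow> dterm_val D e1 q = dterm_val D e2 q" and "p \<in> W"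
  shows "dterm_val D (dterm_dx e1) p = dterm_val D (dterm_dx e2) p"
proof -
  obtain x y where p: "p = (x, y)" by (cases p)
  have xy: "(x, y) \<in> U" "(x, y) \<notin> neg_y_axis" using assms(3,5) p by auto
  have "\<forall>\<^sub>F t in nhds x. dterm_val D e1 (t, y) = dterm_val D e2 (t, y)"
    using eventually_nhds_Pair_fst[OF eventually_nhds_in_open[OF assms(2,5)[unfolded p]]]
    by eventually_elim (rule assms(4))
  from DERIV_cong_ev[OF refl this refl] has_real_derivative_dterm_dx[OF assms(1) xy, of e1]
  have "((\<lambda>t. dterm_val D e2 (t, y)) has_real_derivative dterm_val D (dterm_dx e1) (x, y)) (at x)"
    by blast
  then show ?thesis
    using DERIV_unique has_real_derivative_dterm_dx[OF assms(1) xy, of e2] p by blast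
qed

definition product_partial :: "nat \<Rightarrow> nat \<Rightarrow> dterm" where
  "product_partial i j = (dterm_dx ^^ i) ((dterm_dy ^^ j) (Mult (Partial 0 0) (Cutoff 0 0 0)))"

lemma product_partial_Suc_x: "product_partial (Suc i) j = dterm_dx (product_partial i j)"
  by (simp add: product_partial_def)

lemma in_partial_ideal_product_partial: "in_partial_ideal (product_partial i j)"
proof -
  have "in_partial_ideal ((dterm_dy ^^ j) (Mult (Partial 0 0) (Cutoff 0 0 0)))"
    by (induction j) (auto intro: in_partial_ideal_dterm_dy)
  then show ?thesis
    unfolding product_partial_def by (induction i) (auto intro: in_partial_ideal_dterm_dx)
qed

text \<open>Formally \<open>dterm_dx\<close> and \<open>dterm_dy\<close> only commute up to evaluation, so the y-derivative
  is pushed through the i formal x-derivatives one at a time, on an open set.\<close>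

lemma product_partial_dy:
  assumes "partials_on U D" "open W" "W \<subseteq> U - neg_y_axis" "p \<in> W"
  shows "dterm_val D (dterm_dy (product_partial i j)) p = dterm_val D (product_partial i (Suc j)) p"
  using assms(4)
proof (induction i arbitrary: p)
  case 0
  then show ?case by (simp add: product_partial_def)
next
  case (Suc i)
  have "dterm_val D (dterm_dy (product_partial (Suc i) j)) p
      = dterm_val D (dterm_dx (dterm_dy (product_partial i j))) p"
    by (simp add: product_partial_Suc_x dterm_val_dx_dy_commute)
  also have "\<dots> = dterm_val D (dterm_dx (product_partial i (Suc j))) p"
    by (rule dterm_val_dx_cong[OF assms(1-3) Suc.IH Suc.prems])
  also have "\<dots> = dterm_val D (product_partial (Suc i) (Suc j)) p"
    by (simp add: product_partial_Suc_x)
  finally show ?case .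
qed

lemma partials_on_product_partial:
  assumes V: "open V" and D: "partials_on V D"
  shows "partials_on (V - neg_y_axis) (\<lambda>i j. dterm_val D (product_partial i j))"
  unfolding partials_on_def
proof (intro conjI allI impI)
  have W: "open (V - neg_y_axis)"
    using V closed_neg_y_axis by auto
  fix i j
  show "continuous_on (V - neg_y_axis) (dterm_val D (product_partial i j))"
    using isCont_dterm_val[OF V D] by (intro continuous_at_imp_continuous_on) auto
  fix x y assume xy: "(x, y) \<in> V - neg_y_axis"
  then show "((\<lambda>t. dterm_val D (product_partial i j) (t, y)) has_real_derivative
      dterm_val D (product_partial (Suc i) j) (x, y)) (at x)"
    using has_real_derivative_dterm_dx[OF D] by (simp add: product_partial_Suc_x)
  show "((\<lambda>t. dterm_val D (product_partial i j) (x, t)) has_real_derivative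
      dterm_val D (product_partial i (Suc j)) (x, y)) (at y)"
    using has_real_derivative_dterm_dy[OF D, of x y "product_partial i j"] xy
      product_partial_dy[OF D W order_refl xy]
    by simp
qed

lemma moderate_on_dterm_val:
  assumes "bounded K" and "\<And>q. q \<in> K \<Longrightarrow> quadrant_dist q \<le> 1" and "\<And>i j. flat_on K (D i j)"
  shows "moderate_on K (dterm_val D e)"
  by (induction e) (auto intro: assms flat_on_imp_moderate_on moderate_on_cutoff_term
      moderate_on_const moderate_on_add moderate_on_mult)

lemma flat_on_dterm_val:
  assumes "bounded K" and "\<And>q. q \<in> K \<Longrightarrow> quadrant_dist q \<le> 1" and "\<And>i j. flat_on K (D i j)"
  shows "in_partial_ideal e \<Longrightarrow> flat_on K (dterm_val D e)"
proof (induction e)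
  case (Partial i j)
  then show ?case using assms(3) by simp
next
  case (Add e1 e2)
  then show ?case by (simp add: flat_on_add)
next
  case (Mult e1 e2)
  show ?case
  proof (cases "in_partial_ideal e1")
    case True
    then show ?thesis
      using Mult.IH(1) moderate_on_dterm_val[OF assms] by (simp add: flat_on_mult_moderate_on)
  next
    case False
    then have "flat_on K (\<lambda>q. dterm_val D e2 q * dterm_val D e1 q)"
      using Mult moderate_on_dterm_val[OF assms] by (simp add: flat_on_mult_moderate_on)
    then show ?thesis by (simp add: mult.commute)
  qed
qed simp_all

lemma smooth_on_times_cutoff:
  assumes V: "open V" "bounded V" "\<And>q. q \<in> V \<Longrightarrow> quadrant_dist q \<le> 1"
    and D: "partials_on V D" and flat: "\<And>i j. flat_on V (D i j)"
  shows "smooth_on V (\<lambda>q. D 0 0 q * cutoff q)"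
proof -
  let ?E = "\<lambda>i j. dterm_val D (product_partial i j)"
  have "partials_on V (\<lambda>i j q. if q \<in> neg_y_axis then 0 else ?E i j q)"
  proof (rule partials_on_extend_by_zero[OF V(1) partials_on_product_partial[OF V(1) D]])
    fix i j
    have "flat_on V (?E i j)"
      using flat_on_dterm_val[OF V(2,3) flat in_partial_ideal_product_partial] .
    then show "\<exists>C. \<forall>q\<in>V - neg_y_axis. \<bar>?E i j q\<bar> \<le> C * quadrant_dist q ^ 2"
      unfolding flat_on_def by blast
  qed
  moreover have "(if q \<in> neg_y_axis then 0 else ?E 0 0 q) = D 0 0 q * cutoff q" if "q \<in> V" for q
  proof (cases "q \<in> neg_y_axis")
    case True
    obtain C where "\<And>q. q \<in> V \<Longrightarrow> \<bar>D 0 0 q\<bar> \<le> C * quadrant_dist q ^ 1"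
      using flat_onD[OF flat] by blast
    then have "D 0 0 q = 0"
      using that quadrant_dist_neg_y_axis[OF True] by fastforce
    then show ?thesis using True by simp
  qed (simp add: product_partial_def)
  ultimately show ?thesis
    unfolding smooth_on_iff_partials_on
    by (intro exI[of _ "\<lambda>i j q. if q \<in> neg_y_axis then 0 else ?E i j q"]) auto
qed

lemma open_contains_square:
  fixes U :: "(real \<times> real) set"
  assumes "open U" and "(0, 0) \<in> U"
  obtains r where "0 < r" "r \<le> 1/2" "{-r..r} \<times> {-r..r} \<subseteq> U"
proof -
  obtain e where e: "e > 0" "ball (0, 0) e \<subseteq> U"
    using assms open_contains_ball by blast
  define r where "r = min (e / 3) (1 / 2)"
  have "0 < r" "r \<le> 1/2" using e by (auto simp: r_def)
  moreover have "(x, y) \<in> U" if "(x, y) \<in> {-r..r} \<times> {-r..r}" for x y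
  proof -
    have "norm (x, y) = sqrt (x\<^sup>2 + y\<^sup>2)"
      by (simp add: norm_Pair)
    also have "\<dots> \<le> \<bar>x\<bar> + \<bar>y\<bar>"
      by (rule sqrt_sum_squares_le_sum_abs)
    also have "\<dots> < e" using that e by (auto simp: r_def)
    finally show ?thesis using e by (auto simp: dist_norm zero_prod_def[symmetric])
  qed
  then have "{-r..r} \<times> {-r..r} \<subseteq> U" by auto
  ultimately show ?thesis using that by blast
qed

theorem lemma4p8:
  fixes h :: "real \<times> real \<Rightarrow> real" and U :: "(real \<times> real) set"
  assumes "open U" and "(0, 0) \<in> U"
    and "smooth_on U h" and "h (0, 0) = 0"
    and "\<forall>x y. (x, y) \<in> U \<longrightarrow> x \<ge> 0 \<longrightarrow> y \<le> 0 \<longrightarrow> h (x, y) = 0"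
  shows "\<exists>V h'. open V \<and> (0, 0) \<in> V \<and> V \<subseteq> U \<and> smooth_on V h' \<and> h' (0, 0) = 0 \<and>
           (\<forall>x y. (x, y) \<in> V \<longrightarrow> x \<ge> 0 \<longrightarrow> h' (x, y) = h (x, y)) \<and>
           (\<forall>x y. (x, y) \<in> V \<longrightarrow> y \<le> 0 \<longrightarrow> h' (x, y) = 0)"
proof -
  obtain D where D: "partials_on U D" and Dh: "\<And>p. p \<in> U \<Longrightarrow> D 0 0 p = h p"
    using assms(3) by (auto simp: smooth_on_iff_partials_on)
  have vanish: "D i j (x, y) = 0" if "(x, y) \<in> U" "x \<ge> 0" "y \<le> 0" for i j x y
    using partials_on_vanish_on_quadrant[OF assms(1) D _ that] Dh assms(5) by simp
  obtain r where r: "0 < r" "r \<le> 1/2" and square: "{-r..r} \<times> {-r..r} \<subseteq> U"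
    using open_contains_square[OF assms(1,2)] by blast
  define V where "V = {-r<..<r} \<times> {-r<..<r}"
  have V: "open V" "bounded V" "(0, 0) \<in> V" "V \<subseteq> {-r..r} \<times> {-r..r}" "V \<subseteq> U"
    using r square by (auto simp: V_def open_Times bounded_Times)
  have "smooth_on V (\<lambda>q. D 0 0 q * cutoff q)"
  proof (rule smooth_on_times_cutoff[where D = D])
    show "flat_on V (D i j)" for i j
      using partials_on_flat_at_quadrant[OF D square vanish] V(4) by (rule flat_on_subset)
    show "quadrant_dist q \<le> 1" if "q \<in> V" for q
      using that r by (auto simp: V_def quadrant_dist_def)
  qed (use V partials_on_subset[OF D] in auto)
  then have "smooth_on V (\<lambda>q. h q * cutoff q)"
    by (rule smooth_on_cong) (use Dh V in auto)
  moreover have "h (x, y) * cutoff (x, y) = 0" if "(x, y) \<in> V" "y \<le> 0" for x y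
    using that V(5) assms(5) by (intro mult_cutoff_lower_half_plane) auto
  ultimately show ?thesis
    using V assms(4)
    by (intro exI[of _ V] exI[of _ "\<lambda>q. h q * cutoff q"]) (auto simp: cutoff_right_half_plane)
qed

end
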